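(* Let $(N,+,* )$ be a planar nearring with $D(N)\ne\{0\}$. Then the set $K$ of zero multipliers of $N$ is an ideal of $N$.
   Context: A (right) nearring $(N,+,* )$ is a set with a group $(N,+)$, a semigroup $(N,* )$, and right distributivity $(a+b)*c=a*c+b*c$. $N$ is planar if the relation $a\cong b$ ($x*a=x*b$ for all $x$) has at least $3$ classes and for all $a,b,c$ with $a\not\cong b$ the equation $x*a=x*b+c$ has a unique solution. The zero multipliers are the $n\in N$ with $x*n=0$ for all $x\in N$. $D(N)=\{n: n*(a+b)=n*a+n*b\ \forall a,b\}$. A subset $I$ is an ideal if it is a normal subgroup of $(N,+)$ with $i*n\in I$ for all $i\in I,n\in N$ (right ideal), and $n*m-n*(m+i)\in I$ for all $n,m\in N$, $i\in I$ (left ideal). *)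

theory Defs
  imports Main
begin

definition nearring :: "('a::group_add \<Rightarrow> 'a \<Rightarrow> 'a) \<Rightarrow> bool" where
  "nearring mult \<longleftrightarrow>
     (\<forall>a b c. mult (mult a b) c = mult a (mult b c)) \<and>
     (\<forall>a b c. mult (a + b) c = mult a c + mult b c)"

definition mult_equiv :: "('a \<Rightarrow> 'a \<Rightarrow> 'a) \<Rightarrow> 'a \<Rightarrow> 'a \<Rightarrow> bool" where
  "mult_equiv mult a b \<longleftrightarrow> (\<forall>x. mult x a = mult x b)"

definition planar :: "('a::group_add \<Rightarrow> 'a \<Rightarrow> 'a) \<Rightarrow> bool" where
  "planar mult \<longleftrightarrow>
     (\<exists>a b c. \<not> mult_equiv mult a b \<and> \<not> mult_equiv mult a c \<and> \<not> mult_equiv mult b c) \<and>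
     (\<forall>a b c. \<not> mult_equiv mult a b \<longrightarrow> (\<exists>!x. mult x a = mult x b + c))"

definition zero_multipliers :: "('a::group_add \<Rightarrow> 'a \<Rightarrow> 'a) \<Rightarrow> 'a set" where
  "zero_multipliers mult = {n. \<forall>x. mult x n = 0}"

definition distrib_elems :: "('a::group_add \<Rightarrow> 'a \<Rightarrow> 'a) \<Rightarrow> 'a set" where
  "distrib_elems mult = {n. \<forall>a b. mult n (a + b) = mult n a + mult n b}"

definition normal_subgroup :: "'a::group_add set \<Rightarrow> bool" where
  "normal_subgroup I \<longleftrightarrow>
     0 \<in> I \<and> (\<forall>x\<in>I. \<forall>y\<in>I. x + y \<in> I) \<and> (\<forall>x\<in>I. - x \<in> I) \<and>
     (\<forall>n. \<forall>x\<in>I. n + x - n \<in> I)"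

definition nr_ideal :: "('a::group_add \<Rightarrow> 'a \<Rightarrow> 'a) \<Rightarrow> 'a set \<Rightarrow> bool" where
  "nr_ideal mult I \<longleftrightarrow>
     normal_subgroup I \<and>
     (\<forall>i\<in>I. \<forall>n. mult i n \<in> I) \<and>
     (\<forall>n m. \<forall>i\<in>I. mult n m - mult n (m + i) \<in> I)"

end

theory Submission
  imports Defs
begin

text \<open>In a planar nearring, \<open>x \<star> a = x \<star> b\<close> has only the solution \<open>x = 0\<close> unless
\<open>a \<cong> b\<close>, since \<open>0\<close> is always a solution. Applied to the left-constant element
\<open>y \<star> 0\<close> this forces \<open>y \<star> 0 = 0\<close>; it also makes every non-zero-multiplier \<open>y\<close> satisfy \<open>x \<star> y = 0 \<Longrightarrow>
x = 0\<close>, and hence, for any nonzero \<open>d \<in> D(N)\<close>, identifies the zero multipliers with the kernel of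
the additive endomorphism \<open>y \<mapsto> d \<star> y\<close>, a normal subgroup. Since \<open>d \<star> (m + i) = d \<star> m\<close> for a
zero multiplier \<open>i\<close>, also \<open>m + i \<cong> m\<close>, which is the left ideal condition.\<close>

lemma normal_subgroup_kernel:
  fixes f :: "'a::group_add \<Rightarrow> 'b::group_add"
  assumes additive: "\<And>a b. f (a + b) = f a + f b"
  shows "normal_subgroup {y. f y = 0}"
proof -
  have "f 0 + f 0 = f 0 + 0"
    using additive[of 0 0] by simp
  then have f0: "f 0 = 0"
    by (rule add_left_imp_eq)
  have f_minus: "f (- a) = - f a" for a
    using additive[of "- a" a] f0 by (simp add: eq_neg_iff_add_eq_0)
  have "f (n + x - n) = f n + f x + - f n" for n x
    by (simp only: diff_conv_add_uminus additive f_minus)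
  then show ?thesis
    unfolding normal_subgroup_def using f0 f_minus additive by simp
qed

locale right_nearring =
  fixes mult :: "'a::group_add \<Rightarrow> 'a \<Rightarrow> 'a"  (infixl \<open>\<star>\<close> 70)
  assumes nearring: "nearring mult"
begin

lemma mult_assoc: "a \<star> b \<star> c = a \<star> (b \<star> c)"
  and distrib_right: "(a + b) \<star> c = a \<star> c + b \<star> c"
  using nearring unfolding nearring_def by auto

lemma zero_mult [simp]: "0 \<star> c = 0"
proof -
  have "0 \<star> c + 0 \<star> c = 0 \<star> c + 0"
    using distrib_right[of 0 0 c] by simp
  then show ?thesis
    by (rule add_left_imp_eq)
qed

lemma zero_multipliers_mult_closed:
  assumes "i \<in> zero_multipliers mult"
  shows "i \<star> n \<in> zero_multipliers mult"
  using assms unfolding zero_multipliers_def by (simp add: mult_assoc[symmetric])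

end

locale planar_nearring = right_nearring +
  assumes planar: "planar mult"
begin

lemma eq_zero_if_not_mult_equiv:
  assumes "\<not> mult_equiv mult a b" and "x \<star> a = x \<star> b"
  shows "x = 0"
proof -
  have "\<exists>!x. x \<star> a = x \<star> b + 0"
    using planar assms(1) unfolding planar_def by blast
  moreover have "0 \<star> a = 0 \<star> b + 0" by simp
  moreover have "x \<star> a = x \<star> b + 0" using assms(2) by simp
  ultimately show ?thesis by blast
qed

lemma mult_zero [simp]: "y \<star> 0 = 0"
proof -
  obtain a b where "\<not> mult_equiv mult a b"
    using planar unfolding planar_def by blast
  moreover have "(y \<star> 0) \<star> a = (y \<star> 0) \<star> b"
    by (simp add: mult_assoc)
  ultimately show ?thesis
    by (rule eq_zero_if_not_mult_equiv)
qed

lemma zero_multipliers_iff: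
  assumes "n \<noteq> 0"
  shows "y \<in> zero_multipliers mult \<longleftrightarrow> n \<star> y = 0"
proof
  assume "n \<star> y = 0"
  show "y \<in> zero_multipliers mult"
  proof (rule ccontr)
    assume "y \<notin> zero_multipliers mult"
    then have "\<not> mult_equiv mult y 0"
      unfolding zero_multipliers_def mult_equiv_def by simp
    moreover have "n \<star> y = n \<star> 0"
      using \<open>n \<star> y = 0\<close> by simp
    ultimately have "n = 0"
      by (rule eq_zero_if_not_mult_equiv)
    with assms show False ..
  qed
qed (simp add: zero_multipliers_def)

lemma mult_equiv_add_zero_multiplier:
  assumes "d \<in> distrib_elems mult" "d \<noteq> 0" "i \<in> zero_multipliers mult"
  shows "mult_equiv mult (m + i) m"
proof -
  have "d \<star> (m + i) = d \<star> m"
    using assms unfolding distrib_elems_def zero_multipliers_def by simp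
  show ?thesis
  proof (rule ccontr)
    assume "\<not> mult_equiv mult (m + i) m"
    then have "d = 0"
      using \<open>d \<star> (m + i) = d \<star> m\<close> by (rule eq_zero_if_not_mult_equiv)
    with \<open>d \<noteq> 0\<close> show False ..
  qed
qed

end

theorem mainTheorem5:
  fixes mult :: "'a::group_add \<Rightarrow> 'a \<Rightarrow> 'a"
  assumes "nearring mult"
    and "planar mult"
    and "distrib_elems mult \<noteq> {0}"
  shows "nr_ideal mult (zero_multipliers mult)"
proof -
  interpret planar_nearring mult
    using assms(1,2) by unfold_locales
  have "0 \<in> distrib_elems mult"
    unfolding distrib_elems_def by simp
  with assms(3) obtain d where d: "d \<in> distrib_elems mult" "d \<noteq> 0"
    by blast
  have "zero_multipliers mult = {y. mult d y = 0}"
    using zero_multipliers_iff[OF \<open>d \<noteq> 0\<close>] by blast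
  moreover have "normal_subgroup {y. mult d y = 0}"
    using d(1) unfolding distrib_elems_def by (intro normal_subgroup_kernel) simp
  ultimately have "normal_subgroup (zero_multipliers mult)"
    by simp
  moreover have "mult n m - mult n (m + i) \<in> zero_multipliers mult"
    if "i \<in> zero_multipliers mult" for n m i
  proof -
    have "mult n (m + i) = mult n m"
      using mult_equiv_add_zero_multiplier[OF d that] unfolding mult_equiv_def by blast
    then show ?thesis
      unfolding zero_multipliers_def by simp
  qed
  ultimately show ?thesis
    unfolding nr_ideal_def using zero_multipliers_mult_closed by blast
qed

end
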